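(* Let $E,F$ be Banach lattices, let $\mathcal{P}\subseteq \mathrm{L}(E,F)$ be a nonempty set of operators with $\mathcal{P}+\mathcal{P}\subseteq\mathcal{P}$ and $\mathcal{P}-\mathcal{P}\subseteq\mathcal{P}$, and let $T\in\mathrm{L}(E,F)$. (i) $T$ is an r-$\mathcal{P}$-operator if and only if $T\in\mathcal{P}$ and $T$ is $\mathcal{P}$-dominated. (ii) Assume the modulus $|T|$ of $T$ exists in $\mathrm{L}(E,F)$ and that $\mathcal{P}$ satisfies the domination property. Then $T$ is an r-$\mathcal{P}$-operator if and only if $|T|\in\mathcal{P}$.
   Context: All vector spaces are real; $\mathrm{L}(E,F)$ is the space of bounded linear operators, ordered by $S\le T$ iff $T-S$ is positive. Elements of $\mathcal{P}$ are called $\mathcal{P}$-operators. An operator $T:E\to F$ is an r-$\mathcal{P}$-operator if $T=T_1-T_2$ with $T_1,T_2$ positive operators belonging to $\mathcal{P}$. $\mathcal{P}$ satisfies the domination property if $0\le S\le T\in\mathcal{P}$ implies $S\in\mathcal{P}$. An operator $T\in\mathrm{L}(E,F)$ is $\mathcal{P}$-dominated if there is $U\in\mathcal{P}$ with $T\le U$ and $-T\le U$. *)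

theory Defs
  imports "HOL-Analysis.Analysis"
begin

class banach_lattice = banach + lattice + ordered_real_vector +
  assumes lattice_norm: "sup x (- x) \<le> sup y (- y) \<Longrightarrow> norm x \<le> norm y"

definition positive_op :: "('a::banach_lattice \<Rightarrow>\<^sub>L 'b::banach_lattice) \<Rightarrow> bool" where
  "positive_op T \<longleftrightarrow> (\<forall>x. 0 \<le> x \<longrightarrow> 0 \<le> blinfun_apply T x)"

definition op_le :: "('a::banach_lattice \<Rightarrow>\<^sub>L 'b::banach_lattice) \<Rightarrow> ('a \<Rightarrow>\<^sub>L 'b) \<Rightarrow> bool" where
  "op_le S T \<longleftrightarrow> positive_op (T - S)"

definition r_P_operator :: "('a::banach_lattice \<Rightarrow>\<^sub>L 'b::banach_lattice) set \<Rightarrow> ('a \<Rightarrow>\<^sub>L 'b) \<Rightarrow> bool" where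
  "r_P_operator P T \<longleftrightarrow>
     (\<exists>T1 T2. positive_op T1 \<and> positive_op T2 \<and> T1 \<in> P \<and> T2 \<in> P \<and> T = T1 - T2)"

definition domination_property :: "('a::banach_lattice \<Rightarrow>\<^sub>L 'b::banach_lattice) set \<Rightarrow> bool" where
  "domination_property P \<longleftrightarrow> (\<forall>S T. op_le 0 S \<and> op_le S T \<and> T \<in> P \<longrightarrow> S \<in> P)"

definition P_dominated :: "('a::banach_lattice \<Rightarrow>\<^sub>L 'b::banach_lattice) set \<Rightarrow> ('a \<Rightarrow>\<^sub>L 'b) \<Rightarrow> bool" where
  "P_dominated P T \<longleftrightarrow> (\<exists>U\<in>P. op_le T U \<and> op_le (- T) U)"

definition is_modulus :: "('a::banach_lattice \<Rightarrow>\<^sub>L 'b::banach_lattice) \<Rightarrow> ('a \<Rightarrow>\<^sub>L 'b) \<Rightarrow> bool" where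
  "is_modulus T M \<longleftrightarrow> op_le T M \<and> op_le (- T) M \<and>
     (\<forall>U. op_le T U \<and> op_le (- T) U \<longrightarrow> op_le M U)"

end

theory Submission
  imports Defs
begin

text \<open>If \<open>T = T\<^sub>1 - T\<^sub>2\<close> with positive \<open>T\<^sub>1, T\<^sub>2 \<in> P\<close>, then \<open>T\<^sub>1 + T\<^sub>2 \<in> P\<close> dominates
  \<open>\<plusminus>T\<close>. Conversely, any \<open>U\<close> dominating \<open>\<plusminus>T\<close> is positive, since \<open>2U = (U - T) + (U + T)\<close>,
  and \<open>T = (U + T) - U\<close> is a difference of positive operators; if \<open>U, T \<in> P\<close>,
  both summands lie in \<open>P\<close>. For the modulus \<open>M = |T|\<close>: it lies between \<open>0\<close> and any
  operator dominating \<open>\<plusminus>T\<close>, and \<open>0 \<le> M + T \<le> 2M\<close>, so the domination property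
  puts \<open>M\<close> resp. \<open>M + T\<close> into \<open>P\<close>.\<close>

lemma nonneg_if_double_nonneg:
  fixes a :: "'a::ordered_real_vector"
  assumes "0 \<le> a + a"
  shows "0 \<le> a"
proof -
  have "(1/2::real) *\<^sub>R (a + a) = (1/2 + 1/2::real) *\<^sub>R a"
    by (simp only: scaleR_add_right scaleR_add_left)
  then have "a = (1/2::real) *\<^sub>R (a + a)"
    by simp
  also have "0 \<le> \<dots>"
    using assms by (intro scaleR_nonneg_nonneg) simp_all
  finally show ?thesis .
qed

lemma op_le_0_iff_positive_op: "op_le 0 T \<longleftrightarrow> positive_op T"
  by (simp add: op_le_def)

lemma positive_op_add:
  assumes "positive_op A" "positive_op B"
  shows "positive_op (A + B)"
  using assms by (simp add: positive_op_def blinfun.add_left)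

lemma positive_op_if_dominates:
  assumes "op_le T U" "op_le (- T) U"
  shows "positive_op U"
proof -
  have "positive_op (U - T)" "positive_op (U + T)"
    using assms by (simp_all add: op_le_def)
  then have "positive_op ((U - T) + (U + T))"
    by (rule positive_op_add)
  then have "positive_op (U + U)"
    by simp
  then have "0 \<le> blinfun_apply U x + blinfun_apply U x" if "0 \<le> x" for x
    using that by (simp add: positive_op_def blinfun.add_left)
  then show ?thesis
    unfolding positive_op_def by (blast intro: nonneg_if_double_nonneg)
qed

lemma op_le_diff_add:
  assumes "positive_op A" "positive_op B"
  shows "op_le (A - B) (A + B)" "op_le (- (A - B)) (A + B)"
proof -
  have "A + B - (A - B) = B + B" "A + B - - (A - B) = A + A"
    by simp_all
  then show "op_le (A - B) (A + B)" "op_le (- (A - B)) (A + B)"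
    using assms by (simp_all add: op_le_def positive_op_add)
qed

lemma P_dominated_if_r_P_operator:
  assumes add: "\<forall>S\<in>P. \<forall>R\<in>P. S + R \<in> P" and "r_P_operator P T"
  shows "P_dominated P T"
proof -
  obtain T\<^sub>1 T\<^sub>2 where "positive_op T\<^sub>1" "positive_op T\<^sub>2" "T\<^sub>1 \<in> P" "T\<^sub>2 \<in> P" "T = T\<^sub>1 - T\<^sub>2"
    using \<open>r_P_operator P T\<close> by (auto simp: r_P_operator_def)
  then show ?thesis
    using add op_le_diff_add unfolding P_dominated_def by blast
qed

lemma mem_if_r_P_operator:
  assumes "\<forall>S\<in>P. \<forall>R\<in>P. S - R \<in> P" and "r_P_operator P T"
  shows "T \<in> P"
  using assms by (auto simp: r_P_operator_def)

lemma r_P_operator_if_dominated_by: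
  assumes "op_le T U" "op_le (- T) U" "U \<in> P" "U + T \<in> P"
  shows "r_P_operator P T"
proof -
  have "positive_op U" "positive_op (U + T)"
    using assms(1,2) positive_op_if_dominates by (auto simp: op_le_def)
  moreover have "T = (U + T) - U"
    by simp
  ultimately show ?thesis
    using assms(3,4) unfolding r_P_operator_def by blast
qed

lemma modulus_mem_if_P_dominated:
  assumes "domination_property P" "is_modulus T M" "P_dominated P T"
  shows "M \<in> P"
proof -
  obtain U where "U \<in> P" "op_le T U" "op_le (- T) U"
    using \<open>P_dominated P T\<close> by (auto simp: P_dominated_def)
  moreover have "op_le 0 M"
    using \<open>is_modulus T M\<close> positive_op_if_dominates
    by (auto simp: is_modulus_def op_le_0_iff_positive_op)
  ultimately show ?thesis
    using assms(1,2) unfolding domination_property_def is_modulus_def by blast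
qed

lemma modulus_add_mem:
  assumes add: "\<forall>S\<in>P. \<forall>R\<in>P. S + R \<in> P"
    and "domination_property P" "is_modulus T M" "M \<in> P"
  shows "M + T \<in> P"
proof -
  have "op_le T M" "op_le (- T) M"
    using \<open>is_modulus T M\<close> by (auto simp: is_modulus_def)
  then have "op_le 0 (M + T)" "op_le (M + T) (M + M)"
    by (simp_all add: op_le_def algebra_simps)
  moreover have "M + M \<in> P"
    using add \<open>M \<in> P\<close> by blast
  ultimately show ?thesis
    using \<open>domination_property P\<close> unfolding domination_property_def by blast
qed

theorem proposition3p4:
  fixes P :: "('a::banach_lattice \<Rightarrow>\<^sub>L 'b::banach_lattice) set"
    and T :: "'a \<Rightarrow>\<^sub>L 'b"
  assumes "P \<noteq> {}"
    and add: "\<forall>S\<in>P. \<forall>R\<in>P. S + R \<in> P"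
    and sub: "\<forall>S\<in>P. \<forall>R\<in>P. S - R \<in> P"
  shows "(r_P_operator P T \<longleftrightarrow> T \<in> P \<and> P_dominated P T) \<and>
         (\<forall>M. is_modulus T M \<and> domination_property P \<longrightarrow>
           (r_P_operator P T \<longleftrightarrow> M \<in> P))"
proof (intro conjI allI impI)
  show "r_P_operator P T \<longleftrightarrow> T \<in> P \<and> P_dominated P T"
  proof
    assume "r_P_operator P T"
    then show "T \<in> P \<and> P_dominated P T"
      using add sub mem_if_r_P_operator P_dominated_if_r_P_operator by blast
  next
    assume "T \<in> P \<and> P_dominated P T"
    then obtain U where "U \<in> P" "op_le T U" "op_le (- T) U" "U + T \<in> P"
      using add by (auto simp: P_dominated_def)
    then show "r_P_operator P T"
      by (intro r_P_operator_if_dominated_by)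
  qed
next
  fix M
  assume M: "is_modulus T M \<and> domination_property P"
  show "r_P_operator P T \<longleftrightarrow> M \<in> P"
  proof
    assume "r_P_operator P T"
    then show "M \<in> P"
      using add M modulus_mem_if_P_dominated P_dominated_if_r_P_operator by blast
  next
    assume "M \<in> P"
    have "op_le T M" "op_le (- T) M"
      using M by (simp_all add: is_modulus_def)
    moreover have "M + T \<in> P"
      using modulus_add_mem[OF add] M \<open>M \<in> P\<close> by blast
    ultimately show "r_P_operator P T"
      using \<open>M \<in> P\<close> by (intro r_P_operator_if_dominated_by)
  qed
qed

end
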